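(* Let $a<b$ and $\ell_3>0$, and let $U(y,z)$ be a smooth real-valued function on $[a,b]\times\mathbb{R}$, $\ell_3$-periodic in $z$, satisfying $U_y=0$ at $y=a$ and at $y=b$. Let $A=\max_{y,z}|\nabla U|$ and $B=\max_{y,z}|\Delta U|$. Suppose $k\neq 0$ is real, $c=c_r+ic_i$ is complex with $c_i>0$, and there are smooth functions $u,v,w,p$ on $[a,b]\times\mathbb{R}$, $\ell_3$-periodic in $z$, not all identically zero, such that \[ ik(U-c)u+vU_y+wU_z=-ikp,\quad ik(U-c)v=-p_y,\quad ik(U-c)w=-p_z,\quad iku+v_y+w_z=0, \] with $v(a,z)=v(b,z)=0$ for all $z$. Then \[ (kc_i)^2\le 2A^2+Bc_i, \] equivalently $\left(kc_i-\frac{B}{2k}\right)^2\le 2A^2+\left(\frac{B}{2k}\right)^2$.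
   Context: Here $\nabla=(\partial_y,\partial_z)$ and $\Delta=\partial_y^2+\partial_z^2$. The system is the linearization of the 3D Euler equations in the channel $a\le y\le b$ (slip boundary condition, periodic in $x$ and $z$) about the steady shear $(U(y,z),0,0)$ with constant pressure, for perturbations of the form $e^{ik(x-ct)}(u,v,w,p)(y,z)+\text{c.c.}$; such $c$ is called an unstable eigenvalue with wave number $k$. *)

theory Defs
  imports "HOL-Analysis.Analysis"
begin

definition strip :: "real \<Rightarrow> real \<Rightarrow> (real \<times> real) set" where
  "strip a b = {a..b} \<times> UNIV"

definition dy :: "real \<Rightarrow> real \<Rightarrow> (real \<times> real \<Rightarrow> 'v::real_normed_vector) \<Rightarrow> real \<times> real \<Rightarrow> 'v" where
  "dy a b f = (\<lambda>(y,z). vector_derivative (\<lambda>t. f (t,z)) (at y within {a..b}))"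

definition dz :: "(real \<times> real \<Rightarrow> 'v::real_normed_vector) \<Rightarrow> real \<times> real \<Rightarrow> 'v" where
  "dz f = (\<lambda>(y,z). vector_derivative (\<lambda>t. f (y,t)) (at z))"

text \<open>Smooth (C-infinity) on the closed strip: there is a family D i j
  (playing the role of the i-th y-derivative and j-th z-derivative) with D 0 0 = f,
  all members continuous on the strip, and each member differentiable in y
  (one-sidedly at the walls) and in z with the expected derivatives.\<close>
definition smooth_strip :: "real \<Rightarrow> real \<Rightarrow> (real \<times> real \<Rightarrow> 'v::real_normed_vector) \<Rightarrow> bool" where
  "smooth_strip a b f \<longleftrightarrow> (\<exists>D :: nat \<Rightarrow> nat \<Rightarrow> real \<times> real \<Rightarrow> 'v.
      D 0 0 = f \<and>
      (\<forall>i j. continuous_on (strip a b) (D i j)) \<and>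
      (\<forall>i j y z. y \<in> {a..b} \<longrightarrow>
          ((\<lambda>t. D i j (t,z)) has_vector_derivative D (Suc i) j (y,z)) (at y within {a..b}) \<and>
          ((\<lambda>t. D i j (y,t)) has_vector_derivative D i (Suc j) (y,z)) (at z)))"

definition zperiodic :: "real \<Rightarrow> real \<Rightarrow> real \<Rightarrow> (real \<times> real \<Rightarrow> 'v) \<Rightarrow> bool" where
  "zperiodic a b l f \<longleftrightarrow> (\<forall>y z. y \<in> {a..b} \<longrightarrow> f (y, z + l) = f (y, z))"

end

theory Submission
  imports Defs
begin

text \<open>Put \<open>f = p/(U - c)\<close>, \<open>Z = \<nabla>U/(U - c)\<close> and \<open>G = -ik(v,w)\<close>; the momentum equations say
  \<open>G = \<nabla>p/(U - c) = \<nabla>f + f Z\<close>. By the continuity equation the real vector field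
  \<open>H = Re (conj f G - |f|\<^sup>2 Z)\<close> has divergence
  \<open>|\<nabla>f|\<^sup>2 + k\<^sup>2 |f|\<^sup>2 + |f|\<^sup>2 Re (2 Z\<cdot>Z - \<Delta>U/(U - c))\<close>. As \<open>H\<close> vanishes on the walls
  (\<open>v = U\<^sub>y = 0\<close>) and is periodic in \<open>z\<close>, the divergence integrates to zero over a period cell.
  Since \<open>|U - c| \<ge> c\<^sub>i\<close>, the last term is at least \<open>-(2A\<^sup>2/c\<^sub>i\<^sup>2 + B/c\<^sub>i) |f|\<^sup>2\<close>, so
  \<open>(k\<^sup>2 - 2A\<^sup>2/c\<^sub>i\<^sup>2 - B/c\<^sub>i) \<integral>|f|\<^sup>2 \<le> 0\<close>; and \<open>f \<noteq> 0\<close>, since \<open>p = 0\<close> would force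
  \<open>u = v = w = 0\<close>.\<close>

lemma smooth_strip_continuous:
  "smooth_strip a b f \<Longrightarrow> continuous_on (strip a b) f"
  unfolding smooth_strip_def by metis

lemma smooth_stripE:
  assumes "smooth_strip a b f"
  obtains D where "D 0 0 = f" "\<And>i j. continuous_on (strip a b) (D i j)"
    "\<And>i j y z. y \<in> {a..b} \<Longrightarrow>
       ((\<lambda>t. D i j (t,z)) has_vector_derivative D (Suc i) j (y,z)) (at y within {a..b})"
    "\<And>i j y z. y \<in> {a..b} \<Longrightarrow>
       ((\<lambda>t. D i j (y,t)) has_vector_derivative D i (Suc j) (y,z)) (at z)"
  using assms unfolding smooth_strip_def by blast

lemma dy_eqI:
  assumes "a < b" "y \<in> {a..b}"
    and "((\<lambda>t. f (t,z)) has_vector_derivative f') (at y within {a..b})"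
  shows "dy a b f (y,z) = f'"
  using vector_derivative_within_cbox[of a b y, unfolded cbox_interval] assms by (simp add: dy_def)

lemma dz_eqI:
  "((\<lambda>t. f (y,t)) has_vector_derivative f') (at z) \<Longrightarrow> dz f (y,z) = f'"
  by (simp add: dz_def vector_derivative_at)

lemma smooth_strip_has_dy:
  assumes ab: "a < b" and f: "smooth_strip a b f" and y: "y \<in> {a..b}"
  shows "((\<lambda>t. f (t,z)) has_vector_derivative dy a b f (y,z)) (at y within {a..b})"
proof -
  obtain D :: "nat \<Rightarrow> nat \<Rightarrow> real \<times> real \<Rightarrow> 'a"
    where D0: "D 0 0 = f" and Dy: "\<And>i j y z. y \<in> {a..b} \<Longrightarrow>
       ((\<lambda>t. D i j (t,z)) has_vector_derivative D (Suc i) j (y,z)) (at y within {a..b})"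
    by (rule smooth_stripE[OF f]) blast
  have "((\<lambda>t. f (t,z)) has_vector_derivative D 1 0 (y,z)) (at y within {a..b})"
    using Dy[OF y, of 0 0 z] by (simp add: D0)
  moreover from this have "dy a b f (y,z) = D 1 0 (y,z)"
    by (rule dy_eqI[OF ab y])
  ultimately show ?thesis by simp
qed

lemma smooth_strip_has_dz:
  assumes f: "smooth_strip a b f" and y: "y \<in> {a..b}"
  shows "((\<lambda>t. f (y,t)) has_vector_derivative dz f (y,z)) (at z)"
proof -
  obtain D :: "nat \<Rightarrow> nat \<Rightarrow> real \<times> real \<Rightarrow> 'a"
    where D0: "D 0 0 = f" and Dz: "\<And>i j y z. y \<in> {a..b} \<Longrightarrow>
       ((\<lambda>t. D i j (y,t)) has_vector_derivative D i (Suc j) (y,z)) (at z)"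
    by (rule smooth_stripE[OF f]) blast
  have "((\<lambda>t. f (y,t)) has_vector_derivative D 0 1 (y,z)) (at z)"
    using Dz[OF y, of 0 0 z] by (simp add: D0)
  moreover from this have "dz f (y,z) = D 0 1 (y,z)"
    by (rule dz_eqI)
  ultimately show ?thesis by simp
qed

lemma smooth_strip_cong:
  assumes g: "smooth_strip a b g" and eq: "\<And>q. q \<in> strip a b \<Longrightarrow> f q = g q"
  shows "smooth_strip a b f"
proof -
  obtain D where D0: "D 0 0 = g" and cont: "\<And>i j. continuous_on (strip a b) (D i j)"
    and Dy: "\<And>i j y z. y \<in> {a..b} \<Longrightarrow>
       ((\<lambda>t. D i j (t,z)) has_vector_derivative D (Suc i) j (y,z)) (at y within {a..b})"
    and Dz: "\<And>i j y z. y \<in> {a..b} \<Longrightarrow>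
       ((\<lambda>t. D i j (y,t)) has_vector_derivative D i (Suc j) (y,z)) (at z)"
    by (rule smooth_stripE[OF g]) blast
  define D' where "D' = D(0 := (D 0)(0 := f))"
  have "continuous_on (strip a b) f"
    by (rule continuous_on_eq[OF cont[of 0 0]]) (simp add: D0 eq)
  then have "continuous_on (strip a b) (D' i j)" for i j
    using cont by (auto simp: D'_def)
  moreover have "((\<lambda>t. D' i j (t,z)) has_vector_derivative D' (Suc i) j (y,z)) (at y within {a..b}) \<and>
          ((\<lambda>t. D' i j (y,t)) has_vector_derivative D' i (Suc j) (y,z)) (at z)"
    if y: "y \<in> {a..b}" for i j y z
  proof (cases "i = 0 \<and> j = 0")
    case True
    have "((\<lambda>t. f (t,z)) has_vector_derivative D 1 0 (y,z)) (at y within {a..b})"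
      by (rule has_vector_derivative_transform_within[OF _ zero_less_one y, of "\<lambda>t. g (t,z)"])
        (use Dy[OF y, of 0 0 z] D0 eq in \<open>auto simp: strip_def\<close>)
    moreover have "(\<lambda>t. f (y,t)) = (\<lambda>t. g (y,t))"
      using eq y by (auto simp: strip_def)
    ultimately show ?thesis
      using True Dz[OF y, of 0 0 z] D0 by (auto simp: D'_def)
  qed (use Dy[OF y] Dz[OF y] in \<open>auto simp: D'_def\<close>)
  ultimately show ?thesis
    unfolding smooth_strip_def by (intro exI[of _ D']) (auto simp: D'_def)
qed

lemma smooth_strip_dy:
  assumes ab: "a < b" and f: "smooth_strip a b f"
  shows "smooth_strip a b (dy a b f)"
proof -
  obtain D where D0: "D 0 0 = f" and cont: "\<And>i j. continuous_on (strip a b) (D i j)"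
    and Dy: "\<And>i j y z. y \<in> {a..b} \<Longrightarrow>
       ((\<lambda>t. D i j (t,z)) has_vector_derivative D (Suc i) j (y,z)) (at y within {a..b})"
    and Dz: "\<And>i j y z. y \<in> {a..b} \<Longrightarrow>
       ((\<lambda>t. D i j (y,t)) has_vector_derivative D i (Suc j) (y,z)) (at z)"
    by (rule smooth_stripE[OF f]) blast
  have "smooth_strip a b (D 1 0)"
    unfolding smooth_strip_def using cont Dy Dz by (intro exI[of _ "\<lambda>i. D (Suc i)"]) auto
  moreover have "dy a b f q = D 1 0 q" if "q \<in> strip a b" for q
    using that dy_eqI[OF ab _ Dy[of _ 0 0]] D0 by (cases q) (auto simp: strip_def)
  ultimately show ?thesis by (rule smooth_strip_cong)
qed

lemma smooth_strip_dz:
  assumes f: "smooth_strip a b f"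
  shows "smooth_strip a b (dz f)"
proof -
  obtain D where D0: "D 0 0 = f" and cont: "\<And>i j. continuous_on (strip a b) (D i j)"
    and Dy: "\<And>i j y z. y \<in> {a..b} \<Longrightarrow>
       ((\<lambda>t. D i j (t,z)) has_vector_derivative D (Suc i) j (y,z)) (at y within {a..b})"
    and Dz: "\<And>i j y z. y \<in> {a..b} \<Longrightarrow>
       ((\<lambda>t. D i j (y,t)) has_vector_derivative D i (Suc j) (y,z)) (at z)"
    by (rule smooth_stripE[OF f]) blast
  have "smooth_strip a b (D 0 1)"
    unfolding smooth_strip_def using cont Dy Dz by (intro exI[of _ "\<lambda>i j. D i (Suc j)"]) auto
  moreover have "dz f q = D 0 1 q" if "q \<in> strip a b" for q
    using that dz_eqI[OF Dz[of _ 0 0]] D0 by (cases q) (auto simp: strip_def)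
  ultimately show ?thesis by (rule smooth_strip_cong)
qed

lemma zperiodic_dy:
  assumes per: "zperiodic a b l f"
  shows "zperiodic a b l (dy a b f)"
  unfolding zperiodic_def
proof (intro allI impI)
  fix y z assume y: "y \<in> {a..b}"
  have "\<forall>t. t \<in> {a..b} \<longrightarrow> f (t, z + l) = f (t, z)"
    using per by (simp add: zperiodic_def)
  then have "vector_derivative (\<lambda>t. f (t, z + l)) (at y within {a..b})
      = vector_derivative (\<lambda>t. f (t, z)) (at y within {a..b})"
    by (intro vector_derivative_cong_eq always_eventually refl y)
  then show "dy a b f (y, z + l) = dy a b f (y, z)"
    by (simp add: dy_def)
qed

lemma zperiodic_dz:
  assumes f: "smooth_strip a b f" and per: "zperiodic a b l f"
  shows "zperiodic a b l (dz f)"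
  unfolding zperiodic_def
proof (intro allI impI)
  fix y z assume y: "y \<in> {a..b}"
  have "((\<lambda>t. f (y,t)) \<circ> (\<lambda>t. t + l) has_vector_derivative 1 *\<^sub>R dz f (y,z+l)) (at z)"
    by (intro vector_diff_chain_at smooth_strip_has_dz[OF f y] derivative_eq_intros) auto
  moreover have "(\<lambda>t. f (y,t)) \<circ> (\<lambda>t. t + l) = (\<lambda>t. f (y,t))"
    using per y by (auto simp: zperiodic_def)
  ultimately have "((\<lambda>t. f (y,t)) has_vector_derivative dz f (y,z+l)) (at z)"
    by simp
  then show "dz f (y, z + l) = dz f (y, z)"
    by (rule vector_derivative_unique_at[OF _ smooth_strip_has_dz[OF f y]])
qed

lemma zperiodic_shift_nat:
  assumes "zperiodic a b l f" "y \<in> {a..b}"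
  shows "f (y, z + real n * l) = f (y, z)"
proof (induction n)
  case (Suc n)
  have "f (y, z + real (Suc n) * l) = f (y, (z + real n * l) + l)"
    by (simp add: algebra_simps)
  with assms Suc show ?case by (simp add: zperiodic_def)
qed simp

lemma zperiodic_shift_int:
  assumes "zperiodic a b l f" "y \<in> {a..b}"
  shows "f (y, z + of_int m * l) = f (y, z)"
proof (cases "m \<ge> 0")
  case True
  then show ?thesis using zperiodic_shift_nat[OF assms, of z "nat m"] by simp
next
  case False
  then show ?thesis
    using zperiodic_shift_nat[OF assms, of "z + of_int m * l" "nat (- m)"] by simp
qed

lemma zperiodic_image_cell:
  assumes l: "l > 0" and per: "zperiodic a b l f"
  shows "f ` strip a b = f ` cbox (a,0) (b,l)"
proof
  show "f ` cbox (a,0) (b,l) \<subseteq> f ` strip a b"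
    by (auto simp: strip_def)
  show "f ` strip a b \<subseteq> f ` cbox (a,0) (b,l)"
  proof clarify
    fix y z assume "(y,z) \<in> strip a b"
    then have y: "y \<in> {a..b}" by (simp add: strip_def)
    define m where "m = \<lfloor>z / l\<rfloor>"
    have "of_int m \<le> z / l" "z / l < of_int m + 1"
      by (simp_all add: m_def)
    with l have "z - of_int m * l \<in> {0..l}"
      by (simp add: field_simps)
    moreover have "f (y, z - of_int m * l) = f (y, z)"
      using zperiodic_shift_int[OF per y, of "z - of_int m * l" m] by simp
    ultimately show "f (y,z) \<in> f ` cbox (a,0) (b,l)"
      using y by (auto intro!: image_eqI[of _ _ "(y, z - of_int m * l)"])
  qed
qed

lemma cSUP_upper_zperiodic:
  fixes g :: "real \<times> real \<Rightarrow> real"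
  assumes "l > 0" "continuous_on (strip a b) g" "zperiodic a b l g" "q \<in> strip a b"
  shows "g q \<le> (SUP q\<in>strip a b. g q)"
proof (rule cSUP_upper[OF assms(4)])
  have "cbox (a,0) (b,l) \<subseteq> strip a b"
    by (auto simp: strip_def)
  then have "compact (g ` cbox (a,0) (b,l))"
    by (intro compact_continuous_image continuous_on_subset[OF assms(2)]) auto
  then show "bdd_above (g ` strip a b)"
    unfolding zperiodic_image_cell[OF assms(1,3)] by (intro bounded_imp_bdd_above compact_imp_bounded)
qed

lemma integral_cell_divergence_eq_0:
  fixes h1 h1y h2 h2z :: "real \<times> real \<Rightarrow> real"
  assumes ab: "a \<le> b" and l: "0 \<le> l"
    and cont: "continuous_on (cbox (a,0) (b,l)) h1y" "continuous_on (cbox (a,0) (b,l)) h2z"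
    and h1y: "\<And>y z. y \<in> {a..b} \<Longrightarrow>
      ((\<lambda>t. h1 (t,z)) has_vector_derivative h1y (y,z)) (at y within {a..b})"
    and h2z: "\<And>y z. y \<in> {a..b} \<Longrightarrow> ((\<lambda>t. h2 (y,t)) has_vector_derivative h2z (y,z)) (at z)"
    and walls: "\<And>z. h1 (b,z) = h1 (a,z)"
    and per: "\<And>y. y \<in> {a..b} \<Longrightarrow> h2 (y,l) = h2 (y,0)"
  shows "integral (cbox (a,0) (b,l)) (\<lambda>q. h1y q + h2z q) = 0"
proof -
  have "integral (cbox (a,0) (b,l)) h1y = integral {0..l} (\<lambda>z. integral {a..b} (\<lambda>y. h1y (y,z)))"
    using integral_prod_continuous[OF cont(1)] integral_swap_continuous[of a 0 b l "\<lambda>y z. h1y (y,z)"]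
      cont(1) by simp
  also have "\<dots> = integral {0..l} (\<lambda>z. 0)"
    using fundamental_theorem_of_calculus[OF ab h1y] walls
    by (intro integral_cong) (simp add: integral_unique)
  finally have int1: "integral (cbox (a,0) (b,l)) h1y = 0" by simp
  have "integral (cbox (a,0) (b,l)) h2z = integral {a..b} (\<lambda>y. integral {0..l} (\<lambda>z. h2z (y,z)))"
    using integral_prod_continuous[OF cont(2)] by simp
  also have "\<dots> = integral {a..b} (\<lambda>y. 0)"
  proof (rule integral_cong)
    fix y assume y: "y \<in> {a..b}"
    have "((\<lambda>z. h2z (y,z)) has_integral h2 (y,l) - h2 (y,0)) {0..l}"
      by (rule fundamental_theorem_of_calculus[OF l], rule has_vector_derivative_at_within, rule h2z[OF y])
    with per[OF y] show "integral {0..l} (\<lambda>z. h2z (y,z)) = 0"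
      by (simp add: integral_unique)
  qed
  finally have int2: "integral (cbox (a,0) (b,l)) h2z = 0" by simp
  show ?thesis
    using integral_add[OF integrable_continuous[OF cont(1)] integrable_continuous[OF cont(2)]] int1 int2
    by simp
qed

lemma integral_pos_if_continuous_nonneg:
  fixes g :: "'a::euclidean_space \<Rightarrow> real"
  assumes cont: "continuous_on (cbox s t) g" and nonneg: "\<And>x. x \<in> cbox s t \<Longrightarrow> 0 \<le> g x"
    and ne: "box s t \<noteq> {}" and x: "x \<in> cbox s t" "g x \<noteq> 0"
  shows "0 < integral (cbox s t) g"
proof -
  have "0 \<le> integral (cbox s t) g"
    by (rule integral_nonneg[OF integrable_continuous[OF cont] nonneg])
  moreover have "integral (cbox s t) g \<noteq> 0"
  proof
    assume "integral (cbox s t) g = 0"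
    then have "(g has_integral 0) (cbox s t)"
      using integrable_integral[OF integrable_continuous[OF cont]] by simp
    then have "g x = 0"
      using has_integral_0_cbox_imp_0[OF cont _ _ ne x(1)] nonneg box_subset_cbox by blast
    with x(2) show False ..
  qed
  ultimately show ?thesis by simp
qed

lemma has_vector_derivative_quotient:
  fixes f g :: "real \<Rightarrow> 'a::real_normed_field"
  assumes "(f has_vector_derivative f') (at x within S)" "(g has_vector_derivative g') (at x within S)"
    and "g x \<noteq> 0"
  shows "((\<lambda>t. f t / g t) has_vector_derivative f' / g x - f x / g x * (g' / g x)) (at x within S)"
proof -
  have "((\<lambda>t. f t / g t) has_derivative
      (\<lambda>h. - f x * (inverse (g x) * (h *\<^sub>R g') * inverse (g x)) + (h *\<^sub>R f') / g x)) (at x within S)"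
    using has_derivative_divide[OF assms[unfolded has_vector_derivative_def]] .
  moreover have "(\<lambda>h. - f x * (inverse (g x) * (h *\<^sub>R g') * inverse (g x)) + (h *\<^sub>R f') / g x)
      = (\<lambda>h. h *\<^sub>R (f' / g x - f x / g x * (g' / g x)))"
    by (simp add: fun_eq_iff divide_inverse algebra_simps)
  ultimately show ?thesis
    unfolding has_vector_derivative_def by simp
qed

definition flux :: "complex \<Rightarrow> complex \<Rightarrow> complex \<Rightarrow> real" where
  "flux f Z G = Re (cnj f * G - f * cnj f * Z)"

definition flux_deriv ::
    "complex \<Rightarrow> complex \<Rightarrow> complex \<Rightarrow> complex \<Rightarrow> complex \<Rightarrow> complex \<Rightarrow> real" where
  "flux_deriv f f' Z Z' G G' =
     Re (cnj f * G' + cnj f' * G - (f * cnj f * Z' + (f * cnj f' + f' * cnj f) * Z))"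

lemma has_vector_derivative_flux:
  fixes f Z G :: "real \<Rightarrow> complex"
  assumes "(f has_vector_derivative f') (at x within S)" "(Z has_vector_derivative Z') (at x within S)"
    and "(G has_vector_derivative G') (at x within S)"
  shows "((\<lambda>t. flux (f t) (Z t) (G t)) has_vector_derivative flux_deriv (f x) f' (Z x) Z' (G x) G')
    (at x within S)"
  unfolding flux_def flux_deriv_def
  by (intro bounded_linear.has_vector_derivative[OF bounded_linear_Re] has_vector_derivative_diff
      has_vector_derivative_add has_vector_derivative_mult has_vector_derivative_cnj assms)

text \<open>In the divergence of the flux below, \<open>G\<^sub>j - f Z\<^sub>j\<close> plays the role of \<open>\<partial>\<^sub>j f\<close>, \<open>M\<^sub>j - Z\<^sub>j\<^sup>2\<close> that of
  \<open>\<partial>\<^sub>j Z\<^sub>j\<close> (with \<open>M\<^sub>j = \<partial>\<^sub>j\<^sub>j U/(U - c)\<close>), and the hypothesis is the continuity equation.\<close>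

lemma flux_deriv_sum:
  fixes f G1 G2 G1' G2' Z1 Z2 M1 M2 :: complex and \<kappa> :: real
  assumes "G1' + G2' = of_real \<kappa> * f + G1 * Z1 + G2 * Z2"
  shows "flux_deriv f (G1 - f * Z1) Z1 (M1 - Z1\<^sup>2) G1 G1' + flux_deriv f (G2 - f * Z2) Z2 (M2 - Z2\<^sup>2) G2 G2'
    = (cmod (G1 - f * Z1))\<^sup>2 + (cmod (G2 - f * Z2))\<^sup>2 + \<kappa> * (cmod f)\<^sup>2
      + (cmod f)\<^sup>2 * Re (2 * (Z1\<^sup>2 + Z2\<^sup>2) - (M1 + M2))"
proof -
  have sq: "cnj z * z = of_real ((cmod z)\<^sup>2)" for z
    by (metis complex_norm_square mult.commute of_real_power)
  let ?f1 = "G1 - f * Z1" and ?f2 = "G2 - f * Z2"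
  have "cnj f * (G1' + G2') = cnj f * (of_real \<kappa> * f + G1 * Z1 + G2 * Z2)"
    using assms by simp
  then have "cnj f * G1' + cnj ?f1 * G1 - (f * cnj f * (M1 - Z1\<^sup>2) + (f * cnj ?f1 + ?f1 * cnj f) * Z1)
      + (cnj f * G2' + cnj ?f2 * G2 - (f * cnj f * (M2 - Z2\<^sup>2) + (f * cnj ?f2 + ?f2 * cnj f) * Z2))
      = cnj ?f1 * ?f1 + cnj ?f2 * ?f2 + of_real \<kappa> * (cnj f * f)
        + cnj f * f * (2 * (Z1\<^sup>2 + Z2\<^sup>2) - (M1 + M2))"
    by (simp add: algebra_simps power2_eq_square)
  from arg_cong[OF this, of Re] show ?thesis
    unfolding flux_deriv_def sq by simp
qed

lemma flux_deriv_sum_lower_bound: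
  fixes f G1 G2 G1' G2' Z1 Z2 M1 M2 :: complex and \<kappa> \<alpha> \<beta> :: real
  assumes div: "G1' + G2' = of_real \<kappa> * f + G1 * Z1 + G2 * Z2"
    and Z: "(cmod Z1)\<^sup>2 + (cmod Z2)\<^sup>2 \<le> \<alpha>" and M: "cmod (M1 + M2) \<le> \<beta>"
  shows "(cmod f)\<^sup>2 * (\<kappa> - (2 * \<alpha> + \<beta>))
    \<le> flux_deriv f (G1 - f * Z1) Z1 (M1 - Z1\<^sup>2) G1 G1' + flux_deriv f (G2 - f * Z2) Z2 (M2 - Z2\<^sup>2) G2 G2'"
proof -
  let ?X = "2 * (Z1\<^sup>2 + Z2\<^sup>2) - (M1 + M2)"
  have "cmod (2 * (Z1\<^sup>2 + Z2\<^sup>2)) = 2 * cmod (Z1\<^sup>2 + Z2\<^sup>2)"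
    by (simp only: norm_mult) simp
  moreover have "cmod (Z1\<^sup>2 + Z2\<^sup>2) \<le> (cmod Z1)\<^sup>2 + (cmod Z2)\<^sup>2"
    using norm_triangle_ineq[of "Z1\<^sup>2" "Z2\<^sup>2"] by (simp add: norm_power)
  ultimately have "cmod ?X \<le> 2 * ((cmod Z1)\<^sup>2 + (cmod Z2)\<^sup>2) + cmod (M1 + M2)"
    using norm_triangle_ineq4[of "2 * (Z1\<^sup>2 + Z2\<^sup>2)" "M1 + M2"] by argo
  with Z M have "- (2 * \<alpha> + \<beta>) \<le> Re ?X"
    using abs_Re_le_cmod[of ?X] by (smt (verit))
  then have "(cmod f)\<^sup>2 * - (2 * \<alpha> + \<beta>) \<le> (cmod f)\<^sup>2 * Re ?X"
    by (rule mult_left_mono) simp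
  moreover have "(cmod f)\<^sup>2 * (\<kappa> - (2 * \<alpha> + \<beta>)) = \<kappa> * (cmod f)\<^sup>2 + (cmod f)\<^sup>2 * - (2 * \<alpha> + \<beta>)"
    by (simp add: algebra_simps)
  ultimately show ?thesis
    unfolding flux_deriv_sum[OF div]
    using zero_le_power2[of "cmod (G1 - f * Z1)"] zero_le_power2[of "cmod (G2 - f * Z2)"] by linarith
qed

locale unstable_shear_mode =
  fixes a b l k :: real and c :: complex
    and U :: "real \<times> real \<Rightarrow> real"
    and u v w p :: "real \<times> real \<Rightarrow> complex"
  assumes ab: "a < b" and l: "l > 0"
    and U_smooth: "smooth_strip a b U" and U_per: "zperiodic a b l U"
    and U_wall: "\<forall>z. dy a b U (a,z) = 0 \<and> dy a b U (b,z) = 0"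
    and k: "k \<noteq> 0" and Im_c: "Im c > 0"
    and v_smooth: "smooth_strip a b v" and w_smooth: "smooth_strip a b w"
    and p_smooth: "smooth_strip a b p"
    and w_per: "zperiodic a b l w" and p_per: "zperiodic a b l p"
    and nontriv: "\<exists>q\<in>strip a b. u q \<noteq> 0 \<or> v q \<noteq> 0 \<or> w q \<noteq> 0 \<or> p q \<noteq> 0"
    and eq1: "\<forall>q\<in>strip a b. \<i> * of_real k * (of_real (U q) - c) * u q
                 + v q * of_real (dy a b U q) + w q * of_real (dz U q) = - \<i> * of_real k * p q"
    and eq2: "\<forall>q\<in>strip a b. \<i> * of_real k * (of_real (U q) - c) * v q = - dy a b p q"
    and eq3: "\<forall>q\<in>strip a b. \<i> * of_real k * (of_real (U q) - c) * w q = - dz p q"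
    and eq4: "\<forall>q\<in>strip a b. \<i> * of_real k * u q + dy a b v q + dz w q = 0"
    and bc: "\<forall>z. v (a,z) = 0 \<and> v (b,z) = 0"
begin

text \<open>The flux of the proof idea is \<open>(flux f Zy Gy, flux f Zz Gz)\<close>, with divergence \<open>div_y + div_z\<close>.\<close>

definition W :: "real \<times> real \<Rightarrow> complex" where
  "W q = of_real (U q) - c"

definition f :: "real \<times> real \<Rightarrow> complex" where
  "f q = p q / W q"

definition Zy :: "real \<times> real \<Rightarrow> complex" where
  "Zy q = of_real (dy a b U q) / W q"

definition Zz :: "real \<times> real \<Rightarrow> complex" where
  "Zz q = of_real (dz U q) / W q"

definition Gy :: "real \<times> real \<Rightarrow> complex" where
  "Gy q = - \<i> * of_real k * v q"

definition Gz :: "real \<times> real \<Rightarrow> complex" where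
  "Gz q = - \<i> * of_real k * w q"

definition div_y :: "real \<times> real \<Rightarrow> real" where
  "div_y q = flux_deriv (f q) (Gy q - f q * Zy q) (Zy q) (of_real (dy a b (dy a b U) q) / W q - (Zy q)\<^sup>2)
     (Gy q) (- \<i> * of_real k * dy a b v q)"

definition div_z :: "real \<times> real \<Rightarrow> real" where
  "div_z q = flux_deriv (f q) (Gz q - f q * Zz q) (Zz q) (of_real (dz (dz U) q) / W q - (Zz q)\<^sup>2)
     (Gz q) (- \<i> * of_real k * dz w q)"

lemma W_nonzero: "W q \<noteq> 0"
  using Im_c by (auto simp: W_def complex_eq_iff)

lemma Im_c_le_norm_W: "Im c \<le> cmod (W q)"
  using abs_Im_le_cmod[of "W q"] by (simp add: W_def)

lemma has_dy_W:
  assumes "y \<in> {a..b}"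
  shows "((\<lambda>t. W (t,z)) has_vector_derivative of_real (dy a b U (y,z))) (at y within {a..b})"
  unfolding W_def
  using smooth_strip_has_dy[OF ab U_smooth assms]
  by (auto intro!: derivative_eq_intros simp: has_real_derivative_iff_has_vector_derivative)

lemma has_dz_W:
  assumes "y \<in> {a..b}"
  shows "((\<lambda>t. W (y,t)) has_vector_derivative of_real (dz U (y,z))) (at z)"
  unfolding W_def
  using smooth_strip_has_dz[OF U_smooth assms]
  by (auto intro!: derivative_eq_intros simp: has_real_derivative_iff_has_vector_derivative)

lemma has_dy_f:
  assumes y: "y \<in> {a..b}"
  shows "((\<lambda>t. f (t,z)) has_vector_derivative Gy (y,z) - f (y,z) * Zy (y,z)) (at y within {a..b})"
proof -
  have "((\<lambda>t. f (t,z)) has_vector_derivative dy a b p (y,z) / W (y,z) - f (y,z) * Zy (y,z))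
      (at y within {a..b})"
    unfolding f_def Zy_def
    by (rule has_vector_derivative_quotient[OF smooth_strip_has_dy[OF ab p_smooth y] has_dy_W[OF y] W_nonzero])
  moreover have "dy a b p (y,z) / W (y,z) = Gy (y,z)"
    using eq2 y W_nonzero by (auto simp: Gy_def W_def strip_def field_simps)
  ultimately show ?thesis by simp
qed

lemma has_dz_f:
  assumes y: "y \<in> {a..b}"
  shows "((\<lambda>t. f (y,t)) has_vector_derivative Gz (y,z) - f (y,z) * Zz (y,z)) (at z)"
proof -
  have "((\<lambda>t. f (y,t)) has_vector_derivative dz p (y,z) / W (y,z) - f (y,z) * Zz (y,z)) (at z)"
    unfolding f_def Zz_def
    by (rule has_vector_derivative_quotient[OF smooth_strip_has_dz[OF p_smooth y] has_dz_W[OF y] W_nonzero])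
  moreover have "dz p (y,z) / W (y,z) = Gz (y,z)"
    using eq3 y W_nonzero by (auto simp: Gz_def W_def strip_def field_simps)
  ultimately show ?thesis by simp
qed

lemma has_dy_Zy:
  assumes y: "y \<in> {a..b}"
  shows "((\<lambda>t. Zy (t,z)) has_vector_derivative
      of_real (dy a b (dy a b U) (y,z)) / W (y,z) - (Zy (y,z))\<^sup>2) (at y within {a..b})"
  using has_vector_derivative_quotient[OF
      has_vector_derivative_of_real[OF smooth_strip_has_dy[OF ab smooth_strip_dy[OF ab U_smooth] y,
        unfolded has_real_derivative_iff_has_vector_derivative[symmetric]]]
      has_dy_W[OF y] W_nonzero]
  by (simp add: Zy_def power2_eq_square)

lemma has_dz_Zz:
  assumes y: "y \<in> {a..b}"
  shows "((\<lambda>t. Zz (y,t)) has_vector_derivative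
      of_real (dz (dz U) (y,z)) / W (y,z) - (Zz (y,z))\<^sup>2) (at z)"
  using has_vector_derivative_quotient[OF
      has_vector_derivative_of_real[OF smooth_strip_has_dz[OF smooth_strip_dz[OF U_smooth] y,
        unfolded has_real_derivative_iff_has_vector_derivative[symmetric]]]
      has_dz_W[OF y] W_nonzero]
  by (simp add: Zz_def power2_eq_square)

lemma has_dy_flux:
  assumes y: "y \<in> {a..b}"
  shows "((\<lambda>t. flux (f (t,z)) (Zy (t,z)) (Gy (t,z))) has_vector_derivative div_y (y,z)) (at y within {a..b})"
  unfolding div_y_def
  by (rule has_vector_derivative_flux[OF has_dy_f[OF y] has_dy_Zy[OF y]])
    (use smooth_strip_has_dy[OF ab v_smooth y] in \<open>auto simp: Gy_def intro!: derivative_eq_intros\<close>)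

lemma has_dz_flux:
  assumes y: "y \<in> {a..b}"
  shows "((\<lambda>t. flux (f (y,t)) (Zz (y,t)) (Gz (y,t))) has_vector_derivative div_z (y,z)) (at z)"
  unfolding div_z_def
  by (rule has_vector_derivative_flux[OF has_dz_f[OF y] has_dz_Zz[OF y]])
    (use smooth_strip_has_dz[OF w_smooth y] in \<open>auto simp: Gz_def intro!: derivative_eq_intros\<close>)

lemma continuous_on_div:
  "continuous_on (strip a b) div_y" "continuous_on (strip a b) div_z"
proof -
  note cont = smooth_strip_continuous
  have U: "continuous_on (strip a b) U" "continuous_on (strip a b) (dy a b U)"
      "continuous_on (strip a b) (dz U)" "continuous_on (strip a b) (dy a b (dy a b U))"
      "continuous_on (strip a b) (dz (dz U))"
    by (intro cont smooth_strip_dy smooth_strip_dz ab U_smooth)+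
  have pvw: "continuous_on (strip a b) p" "continuous_on (strip a b) v" "continuous_on (strip a b) w"
      "continuous_on (strip a b) (dy a b v)" "continuous_on (strip a b) (dz w)"
    by (intro cont smooth_strip_dy smooth_strip_dz ab p_smooth v_smooth w_smooth)+
  have W0: "\<forall>q\<in>strip a b. of_real (U q) - c \<noteq> 0"
    using W_nonzero by (simp add: W_def)
  show "continuous_on (strip a b) div_y" "continuous_on (strip a b) div_z"
    unfolding div_y_def div_z_def flux_deriv_def f_def Zy_def Zz_def Gy_def Gz_def W_def
    by (intro continuous_intros U pvw W0)+
qed

lemma flux_y_walls: "flux (f (b,z)) (Zy (b,z)) (Gy (b,z)) = flux (f (a,z)) (Zy (a,z)) (Gy (a,z))"
  using U_wall bc by (simp add: flux_def Zy_def Gy_def)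

lemma flux_z_periodic:
  assumes y: "y \<in> {a..b}"
  shows "flux (f (y,l)) (Zz (y,l)) (Gz (y,l)) = flux (f (y,0)) (Zz (y,0)) (Gz (y,0))"
  using zperiodic_dz[OF U_smooth U_per] U_per p_per w_per y
  unfolding zperiodic_def by (metis add_0 f_def W_def Zz_def Gz_def)

lemma integral_divergence_eq_0:
  "integral (cbox (a,0) (b,l)) (\<lambda>q. div_y q + div_z q) = 0"
proof -
  have cell: "cbox (a,0) (b,l) \<subseteq> strip a b"
    by (auto simp: strip_def)
  show ?thesis
    by (rule integral_cell_divergence_eq_0[OF less_imp_le[OF ab] less_imp_le[OF l]
          continuous_on_subset[OF continuous_on_div(1) cell] continuous_on_subset[OF continuous_on_div(2) cell]
          has_dy_flux has_dz_flux flux_y_walls flux_z_periodic])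
qed

lemma divergence_G_eq:
  assumes q: "q \<in> strip a b"
  shows "- \<i> * of_real k * dy a b v q + - \<i> * of_real k * dz w q
    = of_real (k\<^sup>2) * f q + Gy q * Zy q + Gz q * Zz q"
proof -
  have e4: "dy a b v q + dz w q = - \<i> * of_real k * u q"
    using eq4 q by (simp add: algebra_simps eq_neg_iff_add_eq_0)
  have "\<i> * of_real k * (\<i> * of_real k * W q * u q + v q * of_real (dy a b U q) + w q * of_real (dz U q))
      = \<i> * of_real k * (- \<i> * of_real k * p q)"
    using eq1 q by (simp add: W_def)
  then have "- (of_real (k\<^sup>2) * u q) * W q
      = of_real (k\<^sup>2) * p q + Gy q * of_real (dy a b U q) + Gz q * of_real (dz U q)"
    by (simp add: Gy_def Gz_def algebra_simps power2_eq_square)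
  then have "- (of_real (k\<^sup>2) * u q) = of_real (k\<^sup>2) * f q + Gy q * Zy q + Gz q * Zz q"
    using W_nonzero[of q] by (simp add: f_def Zy_def Zz_def field_simps)
  moreover have "- \<i> * of_real k * dy a b v q + - \<i> * of_real k * dz w q = - (of_real (k\<^sup>2) * u q)"
    using e4 by (simp add: algebra_simps power2_eq_square flip: distrib_left)
  ultimately show ?thesis by simp
qed

lemma divergence_lower_bound:
  assumes q: "q \<in> strip a b"
    and A: "(dy a b U q)\<^sup>2 + (dz U q)\<^sup>2 \<le> A\<^sup>2" and B: "\<bar>dy a b (dy a b U) q + dz (dz U) q\<bar> \<le> B"
  shows "(cmod (f q))\<^sup>2 * (k\<^sup>2 - (2 * (A / Im c)\<^sup>2 + B / Im c)) \<le> div_y q + div_z q"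
proof -
  have W: "Im c \<le> cmod (W q)" "0 < cmod (W q)"
    using Im_c_le_norm_W[of q] Im_c by linarith+
  have "(cmod (Zy q))\<^sup>2 + (cmod (Zz q))\<^sup>2 = ((dy a b U q)\<^sup>2 + (dz U q)\<^sup>2) / (cmod (W q))\<^sup>2"
    by (simp add: Zy_def Zz_def norm_divide power_divide add_divide_distrib)
  also have "\<dots> \<le> A\<^sup>2 / (Im c)\<^sup>2"
    using A W Im_c by (intro frac_le power_mono) auto
  finally have Z: "(cmod (Zy q))\<^sup>2 + (cmod (Zz q))\<^sup>2 \<le> (A / Im c)\<^sup>2"
    by (simp add: power_divide)
  have "cmod (of_real (dy a b (dy a b U) q) / W q + of_real (dz (dz U) q) / W q)
      = \<bar>dy a b (dy a b U) q + dz (dz U) q\<bar> / cmod (W q)"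
    by (simp add: norm_divide flip: add_divide_distrib of_real_add)
  also have "\<dots> \<le> B / Im c"
    using B W Im_c by (intro frac_le) auto
  finally show ?thesis
    unfolding div_y_def div_z_def
    by (intro flux_deriv_sum_lower_bound divergence_G_eq q Z)
qed

lemma p_nonzero: "\<exists>q\<in>strip a b. p q \<noteq> 0"
proof (rule ccontr)
  assume "\<not> ?thesis"
  then have p0: "p q = 0" if "q \<in> strip a b" for q
    using that by blast
  have dp0: "dy a b p q = 0 \<and> dz p q = 0" if q: "q \<in> strip a b" for q
  proof (cases q)
    case (Pair y z)
    with q have y: "y \<in> {a..b}" by (simp add: strip_def)
    have "((\<lambda>t. p (t,z)) has_vector_derivative 0) (at y within {a..b})"
      by (rule has_vector_derivative_transform_within[OF has_vector_derivative_const zero_less_one y])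
        (use p0 in \<open>auto simp: strip_def\<close>)
    moreover have "(\<lambda>t. p (y,t)) = (\<lambda>t. 0)"
      using p0 y by (auto simp: strip_def)
    ultimately show ?thesis
      using Pair dy_eqI[OF ab y] dz_eqI[of p y 0 z] by simp
  qed
  have "u q = 0 \<and> v q = 0 \<and> w q = 0 \<and> p q = 0" if q: "q \<in> strip a b" for q
  proof -
    have nz: "\<i> * of_real k * W q \<noteq> 0"
      using k W_nonzero by simp
    moreover have "\<i> * of_real k * W q * v q = 0" "\<i> * of_real k * W q * w q = 0"
      using eq2 eq3 q dp0[OF q] by (auto simp: W_def)
    ultimately have "v q = 0" "w q = 0"
      by simp_all
    moreover have "\<i> * of_real k * W q * u q = 0"
      using eq1 q p0[OF q] \<open>v q = 0\<close> \<open>w q = 0\<close> by (auto simp: W_def)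
    ultimately show ?thesis
      using nz p0[OF q] by simp
  qed
  with nontriv show False by blast
qed

lemma continuous_on_f: "continuous_on (strip a b) f"
  using smooth_strip_continuous[OF p_smooth] smooth_strip_continuous[OF U_smooth] W_nonzero
  unfolding f_def W_def by (intro continuous_intros) auto

lemma integral_norm_f_pos: "0 < integral (cbox (a,0) (b,l)) (\<lambda>q. (cmod (f q))\<^sup>2)"
proof -
  obtain q where q: "q \<in> cbox (a,0) (b,l)" "p q \<noteq> 0"
    using p_nonzero zperiodic_image_cell[OF l p_per] by (metis image_iff)
  show ?thesis
  proof (rule integral_pos_if_continuous_nonneg)
    show "continuous_on (cbox (a,0) (b,l)) (\<lambda>q. (cmod (f q))\<^sup>2)"
      by (intro continuous_intros continuous_on_subset[OF continuous_on_f]) (auto simp: strip_def)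
    show "box (a,0) (b,l) \<noteq> {}"
      using ab l by (auto simp: box_eq_empty Basis_prod_def)
    show "q \<in> cbox (a,0) (b,l)" "(cmod (f q))\<^sup>2 \<noteq> 0"
      using q W_nonzero by (auto simp: f_def)
  qed simp
qed

lemma grad_U_le_SUP:
  assumes q: "q \<in> strip a b"
  shows "(dy a b U q)\<^sup>2 + (dz U q)\<^sup>2 \<le> (SUP q\<in>strip a b. sqrt ((dy a b U q)\<^sup>2 + (dz U q)\<^sup>2))\<^sup>2"
proof (rule sqrt_le_D)
  have "smooth_strip a b (dy a b U)" "smooth_strip a b (dz U)"
    by (intro smooth_strip_dy smooth_strip_dz ab U_smooth)+
  then show "sqrt ((dy a b U q)\<^sup>2 + (dz U q)\<^sup>2) \<le> (SUP q\<in>strip a b. sqrt ((dy a b U q)\<^sup>2 + (dz U q)\<^sup>2))"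
    using zperiodic_dy[OF U_per] zperiodic_dz[OF U_smooth U_per]
    by (intro cSUP_upper_zperiodic[OF l _ _ q] continuous_intros smooth_strip_continuous)
      (simp_all add: zperiodic_def)
qed

lemma lap_U_le_SUP:
  assumes q: "q \<in> strip a b"
  shows "\<bar>dy a b (dy a b U) q + dz (dz U) q\<bar> \<le> (SUP q\<in>strip a b. \<bar>dy a b (dy a b U) q + dz (dz U) q\<bar>)"
proof -
  have Uz: "smooth_strip a b (dz U)"
    by (rule smooth_strip_dz[OF U_smooth])
  have "smooth_strip a b (dy a b (dy a b U))" "smooth_strip a b (dz (dz U))"
    by (intro smooth_strip_dy smooth_strip_dz ab U_smooth Uz)+
  then show ?thesis
    using zperiodic_dy[OF zperiodic_dy[OF U_per]] zperiodic_dz[OF Uz zperiodic_dz[OF U_smooth U_per]]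
    by (intro cSUP_upper_zperiodic[OF l _ _ q] continuous_intros smooth_strip_continuous)
      (simp_all add: zperiodic_def)
qed

lemma growth_bound:
  assumes A: "A = (SUP q\<in>strip a b. sqrt ((dy a b U q)\<^sup>2 + (dz U q)\<^sup>2))"
    and B: "B = (SUP q\<in>strip a b. \<bar>dy a b (dy a b U) q + dz (dz U) q\<bar>)"
  shows "(k * Im c)\<^sup>2 \<le> 2 * A\<^sup>2 + B * Im c"
proof -
  let ?C = "cbox (a,0) (b,l)" and ?M = "2 * (A / Im c)\<^sup>2 + B / Im c"
  have cell: "?C \<subseteq> strip a b"
    by (auto simp: strip_def)
  have "(cmod (f q))\<^sup>2 * (k\<^sup>2 - ?M) \<le> div_y q + div_z q" if q: "q \<in> strip a b" for q
    using divergence_lower_bound[OF q grad_U_le_SUP[OF q, folded A] lap_U_le_SUP[OF q, folded B]] .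
  then have "integral ?C (\<lambda>q. (cmod (f q))\<^sup>2 * (k\<^sup>2 - ?M)) \<le> integral ?C (\<lambda>q. div_y q + div_z q)"
    using cell continuous_on_subset[OF continuous_on_f cell]
      continuous_on_subset[OF continuous_on_div(1) cell] continuous_on_subset[OF continuous_on_div(2) cell]
    by (intro integral_le integrable_continuous continuous_intros) auto
  then have "integral ?C (\<lambda>q. (cmod (f q))\<^sup>2) * (k\<^sup>2 - ?M) \<le> 0"
    by (simp add: integral_divergence_eq_0)
  with integral_norm_f_pos have "k\<^sup>2 \<le> ?M"
    by (simp add: mult_le_0_iff)
  then have "k\<^sup>2 * (Im c)\<^sup>2 \<le> ?M * (Im c)\<^sup>2"
    by (rule mult_right_mono) simp
  also have "\<dots> = 2 * A\<^sup>2 + B * Im c"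
    using Im_c by (simp add: field_simps power2_eq_square)
  finally show ?thesis
    by (simp add: power_mult_distrib)
qed

end

theorem theorem3:
  fixes a b l3 k :: real and c :: complex
    and U :: "real \<times> real \<Rightarrow> real"
    and u v w p :: "real \<times> real \<Rightarrow> complex"
  assumes ab: "a < b" and l3: "l3 > 0"
    and U_smooth: "smooth_strip a b U" and U_per: "zperiodic a b l3 U"
    and U_wall: "\<forall>z. dy a b U (a,z) = 0 \<and> dy a b U (b,z) = 0"
    and k: "k \<noteq> 0" and ci: "Im c > 0"
    and sm: "smooth_strip a b u" "smooth_strip a b v" "smooth_strip a b w" "smooth_strip a b p"
    and per: "zperiodic a b l3 u" "zperiodic a b l3 v" "zperiodic a b l3 w" "zperiodic a b l3 p"
    and nontriv: "\<exists>q\<in>strip a b. u q \<noteq> 0 \<or> v q \<noteq> 0 \<or> w q \<noteq> 0 \<or> p q \<noteq> 0"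
    and eq1: "\<forall>q\<in>strip a b. \<i> * of_real k * (of_real (U q) - c) * u q
                 + v q * of_real (dy a b U q) + w q * of_real (dz U q) = - \<i> * of_real k * p q"
    and eq2: "\<forall>q\<in>strip a b. \<i> * of_real k * (of_real (U q) - c) * v q = - dy a b p q"
    and eq3: "\<forall>q\<in>strip a b. \<i> * of_real k * (of_real (U q) - c) * w q = - dz p q"
    and eq4: "\<forall>q\<in>strip a b. \<i> * of_real k * u q + dy a b v q + dz w q = 0"
    and bc: "\<forall>z. v (a,z) = 0 \<and> v (b,z) = 0"
    and A_def: "A = (SUP q\<in>strip a b. sqrt ((dy a b U q)\<^sup>2 + (dz U q)\<^sup>2))"
    and B_def: "B = (SUP q\<in>strip a b. \<bar>dy a b (dy a b U) q + dz (dz U) q\<bar>)"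
  shows "(k * Im c)\<^sup>2 \<le> 2 * A\<^sup>2 + B * Im c"
proof -
  interpret unstable_shear_mode a b l3 k c U u v w p
    using ab l3 U_smooth U_per U_wall k ci sm(2-4) per(3,4) nontriv eq1 eq2 eq3 eq4 bc
    by unfold_locales
  show ?thesis
    by (rule growth_bound[OF A_def B_def])
qed

end
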